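(* Let $d\ge1$, $m\in\mathbb{N}$ ($m\ge1$), and let $A_0,A_1\in\mathbb{R}^{d\times d}$ be constant matrices. Let $\Psi:\mathbb{Z}_{-m}^{0}\to\mathbb{R}^{d\times d}$ satisfy $A_1\Psi(u)=\Psi(u)A_1$ for all $u\in\mathbb{Z}_{-m}^{0}$, and let $Z$ be the discrete function defined in the context. Then \[ X(u)=Z(u)\Psi(-m)+\sum_{r=-m+1}^{0}Z(u-m-r)\,\Delta\Psi(r-1),\qquad u\in\mathbb{Z}_{-m}^{\infty}, \] is the unique solution of \[ \Delta X(u)=A_0X(u-m)+X(u-m)A_1,\ \ u\in\mathbb{Z}_0^{\infty},\qquad X(u)=\Psi(u),\ \ u\in\mathbb{Z}_{-m}^{0}. \]
   Context: $\Theta$ and $I$ denote the $d\times d$ zero and identity matrices; $\mathbb{Z}_a^b=\{a,a+1,\dots,b\}$ (with $\mathbb{Z}_a^\infty=\{a,a+1,\dots\}$ and $\mathbb{Z}_{-\infty}^b=\{\dots,b-1,b\}$); $\Delta X(u)=X(u+1)-X(u)$ (so $\Delta\Psi(r-1)=\Psi(r)-\Psi(r-1)$). For integers $a$ and $r\ge0$, $\binom{a}{r}=a(a-1)\cdots(a-r+1)/r!$. Define matrices $Q_{r+1}(rm)$, $r=0,1,2,\dots$, by $Q_1(0)=I$ and $Q_{r+1}(rm)=A_0Q_r((r-1)m)+Q_r((r-1)m)A_1$ for $r\ge1$. Define $Z(u)=\Theta$ for $u\in\mathbb{Z}_{-\infty}^{-m-1}$, $Z(u)=I$ for $u\in\mathbb{Z}_{-m}^{0}$,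 and for each integer $n\ge1$ and $u\in\mathbb{Z}_{(n-1)(m+1)+1}^{n(m+1)}$, \[ Z(u)=\sum_{r=0}^{n}\binom{u-(r-1)m}{r}Q_{r+1}(rm). \] *)

theory Defs
  imports "HOL-Analysis.Analysis"
begin

text \<open>Qmat A0 A1 r is the matrix Q_{r+1}(r m) of the paper:
  Q_1(0) = I, Q_{r+1}(rm) = A0 Q_r((r-1)m) + Q_r((r-1)m) A1.\<close>
fun Qmat :: "real^'n^'n \<Rightarrow> real^'n^'n \<Rightarrow> nat \<Rightarrow> real^'n^'n" where
  "Qmat A0 A1 0 = mat 1"
| "Qmat A0 A1 (Suc r) = A0 ** Qmat A0 A1 r + Qmat A0 A1 r ** A1"

definition ibinom :: "int \<Rightarrow> nat \<Rightarrow> real" where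
  "ibinom a r = (of_int a :: real) gchoose r"

text \<open>The discrete function Z. For u \<ge> 1, the block index n is the unique n \<ge> 1 with
  (n-1)(m+1)+1 \<le> u \<le> n(m+1), i.e. n = (u + m) div (m + 1).\<close>
definition Zmat :: "real^'n^'n \<Rightarrow> real^'n^'n \<Rightarrow> nat \<Rightarrow> int \<Rightarrow> real^'n^'n" where
  "Zmat A0 A1 m u =
     (if u < - int m then 0
      else if u \<le> 0 then mat 1
      else (\<Sum>r\<in>{0..nat ((u + int m) div (int m + 1))}.
              ibinom (u - (int r - 1) * int m) r *\<^sub>R Qmat A0 A1 r))"

end

theory Submission
  imports Defs
begin

(* Z is the fundamental matrix of the delay equation: its coefficients binom(u - (r-1)m, r)
   satisfy Pascal's rule in the form c(u+1, r+1) - c(u, r+1) = c(u-m, r), and together with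
   Q_{r+2} = A0 Q_{r+1} + Q_{r+1} A1 this gives Delta Z(u) = A0 Z(u-m) + Z(u-m) A1 for u >= -m.
   The equation is linear, invariant under shifts in u and under right multiplication by
   matrices commuting with A1, so X, a superposition of delayed copies of Z multiplied on the
   right by Psi(-m) and by the increments of Psi, is again a solution. Since Z vanishes below
   -m and equals I on the initial window, the sum defining X telescopes to Psi there.
   Uniqueness holds because the equation determines X(u+1) from X(u) and X(u-m). *)

lemma linear_matrix_mult_left: "linear (\<lambda>A::real^'n^'m. A ** B)"
  by (rule linearI)
    (simp_all add: vec_eq_iff matrix_matrix_mult_def sum.distrib sum_distrib_left algebra_simps)

lemma linear_matrix_mult_right: "linear (\<lambda>B::real^'p^'n. A ** B)"
  by (rule linearI) (simp_all add: matrix_add_ldistrib matrix_scalar_ac flip: scalar_matrix_assoc)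

lemma le_zdiv_iff_mult_le: "(0::int) < b \<Longrightarrow> r \<le> a div b \<longleftrightarrow> r * b \<le> a"
  by (smt (verit, del_insts) minus_div_mult_eq_mod nonzero_mult_div_cancel_right pos_mod_sign
      zdiv_mono1)

lemma sum_int_telescope:
  fixes f :: "int \<Rightarrow> 'a::ab_group_add"
  assumes "a \<le> b"
  shows "(\<Sum>r\<in>{a + 1..b}. f r - f (r - 1)) = f b - f a"
  using assms
proof (induction b rule: int_ge_induct)
  case (step b)
  have "{a + 1..b + 1} = insert (b + 1) {a + 1..b}" using step.hyps by auto
  then show ?case using step.IH by simp
qed simp

(* Unlike ibinom, this vanishes for negative arguments, so that Pascal's rule holds for all
   integers and Z(u) is a sum over any sufficiently long range of r. *)
definition trunc_binom :: "int \<Rightarrow> nat \<Rightarrow> real" where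
  "trunc_binom a r = (if 0 \<le> a then real (nat a choose r) else 0)"

lemma trunc_binom_eq_0: "a < int r \<Longrightarrow> trunc_binom a r = 0"
  by (auto simp: trunc_binom_def intro!: binomial_eq_0)

lemma trunc_binom_0: "0 \<le> a \<Longrightarrow> trunc_binom a 0 = 1"
  by (simp add: trunc_binom_def)

lemma trunc_binom_Suc_Suc: "trunc_binom (a + 1) (Suc r) = trunc_binom a (Suc r) + trunc_binom a r"
proof (cases "0 \<le> a")
  case True
  then have "nat (a + 1) = Suc (nat a)" by simp
  then show ?thesis using True by (simp add: trunc_binom_def)
qed (auto simp: trunc_binom_def)

lemma ibinom_eq_trunc_binom: "0 \<le> a \<Longrightarrow> ibinom a r = trunc_binom a r"
  by (simp add: ibinom_def trunc_binom_def binomial_gbinomial)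

lemma Zmat_eq_sum:
  assumes "u + int m \<le> int N"
  shows "Zmat A0 A1 m u = (\<Sum>r\<le>N. trunc_binom (u - (int r - 1) * int m) r *\<^sub>R Qmat A0 A1 r)"
proof -
  define c where "c r = trunc_binom (u - (int r - 1) * int m) r" for r
  have vanish: "c r = 0" if "u + int m < int r * (int m + 1)" for r
    using that by (auto simp: c_def algebra_simps intro!: trunc_binom_eq_0)
  show ?thesis
  proof (cases "u < - int m")
    case True
    have "c r = 0" for r
    proof (rule vanish)
      have "0 \<le> int r * (int m + 1)" by simp
      then show "u + int m < int r * (int m + 1)" using True by linarith
    qed
    then show ?thesis using True by (simp add: Zmat_def flip: c_def)
  next
    case False
    define n where "n = nat ((u + int m) div (int m + 1))"
    have below_n: "r \<le> n \<longleftrightarrow> int r * (int m + 1) \<le> u + int m" for r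
      using False le_zdiv_iff_mult_le[of "int m + 1" "int r" "u + int m"]
      by (simp add: n_def le_nat_iff pos_imp_zdiv_nonneg_iff)
    have "Zmat A0 A1 m u = (\<Sum>r\<le>n. ibinom (u - (int r - 1) * int m) r *\<^sub>R Qmat A0 A1 r)"
    proof (cases "u \<le> 0")
      case True
      then have "n = 0" using False by (simp add: n_def div_pos_pos_trivial)
      then show ?thesis using True False by (simp add: Zmat_def ibinom_def)
    qed (use False in \<open>simp add: Zmat_def n_def atLeast0AtMost\<close>)
    also have "\<dots> = (\<Sum>r\<le>n. c r *\<^sub>R Qmat A0 A1 r)"
      using below_n by (intro sum.cong refl) (simp add: c_def ibinom_eq_trunc_binom algebra_simps)
    also have "\<dots> = (\<Sum>r\<le>N. c r *\<^sub>R Qmat A0 A1 r)"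
    proof (rule sum.mono_neutral_left)
      have "int n \<le> int n * (int m + 1)" by (simp add: algebra_simps)
      then show "{..n} \<subseteq> {..N}" using below_n[of n] assms by simp
    qed (use below_n vanish in auto)
    finally show ?thesis by (simp add: c_def)
  qed
qed

definition solves_delay_from ::
    "real^'n^'n \<Rightarrow> real^'n^'n \<Rightarrow> nat \<Rightarrow> int \<Rightarrow> (int \<Rightarrow> real^'n^'n) \<Rightarrow> bool" where
  "solves_delay_from A0 A1 m a X \<longleftrightarrow>
     (\<forall>u\<ge>a. X (u + 1) - X u = A0 ** X (u - int m) + X (u - int m) ** A1)"

lemma Zmat_solves_delay: "solves_delay_from A0 A1 m (- int m) (Zmat A0 A1 m)"
  unfolding solves_delay_from_def
proof (intro allI impI)
  fix u assume u: "- int m \<le> u"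
  define N where "N = nat (u + int m)"
  define c where "c v r = trunc_binom (v - (int r - 1) * int m) r" for v r
  define Q where "Q = Qmat A0 A1"
  have Z: "Zmat A0 A1 m v = (\<Sum>r\<le>Suc N. c v r *\<^sub>R Q r)" if "v \<le> u + 1" for v
    unfolding c_def Q_def using that u by (intro Zmat_eq_sum) (simp add: N_def)
  have Z_delayed: "Zmat A0 A1 m (u - int m) = (\<Sum>r\<le>N. c (u - int m) r *\<^sub>R Q r)"
    unfolding c_def Q_def using u by (intro Zmat_eq_sum) (simp add: N_def)
  have pascal: "c (u + 1) (Suc r) - c u (Suc r) = c (u - int m) r" for r
    using trunc_binom_Suc_Suc[of "u - int r * int m" r] by (simp add: c_def algebra_simps)
  have "Zmat A0 A1 m (u + 1) - Zmat A0 A1 m u = (\<Sum>r\<le>Suc N. (c (u + 1) r - c u r) *\<^sub>R Q r)"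
    by (simp add: Z sum_subtractf scaleR_diff_left)
  also have "\<dots> = (\<Sum>r\<le>N. (c (u + 1) (Suc r) - c u (Suc r)) *\<^sub>R Q (Suc r))"
    using u by (simp add: sum.atMost_Suc_shift c_def trunc_binom_0 del: sum.atMost_Suc)
  also have "\<dots> = (\<Sum>r\<le>N. c (u - int m) r *\<^sub>R (A0 ** Q r + Q r ** A1))"
    by (simp add: pascal Q_def)
  also have "\<dots> = A0 ** Zmat A0 A1 m (u - int m) + Zmat A0 A1 m (u - int m) ** A1"
    by (simp add: Z_delayed scaleR_add_right sum.distrib
        linear_sum[OF linear_matrix_mult_left] linear_sum[OF linear_matrix_mult_right]
        linear_scale[OF linear_matrix_mult_left] linear_scale[OF linear_matrix_mult_right])
  finally show "Zmat A0 A1 m (u + 1) - Zmat A0 A1 m u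
      = A0 ** Zmat A0 A1 m (u - int m) + Zmat A0 A1 m (u - int m) ** A1" .
qed

lemma solves_delay_from_mono:
  "solves_delay_from A0 A1 m a X \<Longrightarrow> a \<le> b \<Longrightarrow> solves_delay_from A0 A1 m b X"
  by (simp add: solves_delay_from_def)

lemma solves_delay_from_shift:
  assumes "solves_delay_from A0 A1 m a X"
  shows "solves_delay_from A0 A1 m (a + s) (\<lambda>u. X (u - s))"
  unfolding solves_delay_from_def
proof (intro allI impI)
  fix u assume "a + s \<le> u"
  then have "X (u - s + 1) - X (u - s) = A0 ** X (u - s - int m) + X (u - s - int m) ** A1"
    using assms by (simp add: solves_delay_from_def)
  then show "X (u + 1 - s) - X (u - s) = A0 ** X (u - int m - s) + X (u - int m - s) ** A1"
    by (simp add: algebra_simps)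
qed

lemma solves_delay_from_mult_right:
  assumes X: "solves_delay_from A0 A1 m a X" and commute: "A1 ** P = P ** A1"
  shows "solves_delay_from A0 A1 m a (\<lambda>u. X u ** P)"
  unfolding solves_delay_from_def
proof (intro allI impI)
  fix u assume "a \<le> u"
  then have "X (u + 1) - X u = A0 ** X (u - int m) + X (u - int m) ** A1"
    using X by (simp add: solves_delay_from_def)
  then have "(X (u + 1) - X u) ** P = A0 ** (X (u - int m) ** P) + X (u - int m) ** (A1 ** P)"
    by (simp add: linear_add[OF linear_matrix_mult_left] matrix_mul_assoc)
  then show "X (u + 1) ** P - X u ** P = A0 ** (X (u - int m) ** P) + X (u - int m) ** P ** A1"
    by (simp add: commute linear_diff[OF linear_matrix_mult_left] matrix_mul_assoc)
qed

lemma solves_delay_from_add: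
  assumes "solves_delay_from A0 A1 m a X" and "solves_delay_from A0 A1 m a Y"
  shows "solves_delay_from A0 A1 m a (\<lambda>u. X u + Y u)"
  using assms
  by (simp add: solves_delay_from_def matrix_add_ldistrib linear_add[OF linear_matrix_mult_left]
      algebra_simps)

lemma solves_delay_from_sum:
  assumes "\<And>i. i \<in> I \<Longrightarrow> solves_delay_from A0 A1 m a (X i)"
  shows "solves_delay_from A0 A1 m a (\<lambda>u. \<Sum>i\<in>I. X i u)"
  using assms
  by (simp add: solves_delay_from_def linear_sum[OF linear_matrix_mult_left]
      linear_sum[OF linear_matrix_mult_right] sum.distrib flip: sum_subtractf)

lemma solves_delay_from_unique:
  assumes X: "solves_delay_from A0 A1 m a X" and Y: "solves_delay_from A0 A1 m a Y"
    and initial: "\<forall>u\<in>{a - int m..a}. X u = Y u" and "a - int m \<le> u"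
  shows "X u = Y u"
proof -
  have "X (a - int m + int k) = Y (a - int m + int k)" for k
  proof (induction k rule: less_induct)
    case (less k)
    show ?case
    proof (cases "k \<le> m")
      case True
      then show ?thesis using initial by simp
    next
      case False
      then obtain j where k: "k = Suc j" and "m \<le> j" by (cases k) auto
      define v where "v = a - int m + int j"
      have "X v = Y v" "X (v - int m) = Y (v - int m)"
        using less.IH[of j] less.IH[of "j - m"] k \<open>m \<le> j\<close>
        by (simp_all add: v_def of_nat_diff add_diff_eq)
      have "a \<le> v" using \<open>m \<le> j\<close> by (simp add: v_def)
      have step: "Z (v + 1) = Z v + (A0 ** Z (v - int m) + Z (v - int m) ** A1)"
        if "solves_delay_from A0 A1 m a Z" for Z
      proof -
        have "Z (v + 1) - Z v = A0 ** Z (v - int m) + Z (v - int m) ** A1"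
          using that \<open>a \<le> v\<close> by (simp add: solves_delay_from_def)
        then show ?thesis by (metis add.commute diff_add_cancel)
      qed
      have "X (v + 1) = Y (v + 1)"
        using step[OF X] step[OF Y] \<open>X v = Y v\<close> \<open>X (v - int m) = Y (v - int m)\<close> by simp
      moreover have "a - int m + int k = v + 1" by (simp add: v_def k)
      ultimately show ?thesis by simp
    qed
  qed
  from this[of "nat (u - a + int m)"] show ?thesis using \<open>a - int m \<le> u\<close> by simp
qed

definition delay_ivp_solution ::
    "real^'n^'n \<Rightarrow> real^'n^'n \<Rightarrow> nat \<Rightarrow> (int \<Rightarrow> real^'n^'n) \<Rightarrow> int \<Rightarrow> real^'n^'n" where
  "delay_ivp_solution A0 A1 m Psi u = Zmat A0 A1 m u ** Psi (- int m)
     + (\<Sum>r\<in>{- int m + 1..0}. Zmat A0 A1 m (u - int m - r) ** (Psi r - Psi (r - 1)))"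

lemma delay_ivp_solution_initial:
  assumes "u \<in> {- int m..0}"
  shows "delay_ivp_solution A0 A1 m Psi u = Psi u"
proof -
  have "(\<Sum>r\<in>{- int m + 1..0}. Zmat A0 A1 m (u - int m - r) ** (Psi r - Psi (r - 1)))
      = (\<Sum>r\<in>{- int m + 1..u}. Psi r - Psi (r - 1))"
    using assms by (intro sum.mono_neutral_cong_right) (auto simp: Zmat_def)
  also have "\<dots> = Psi u - Psi (- int m)"
    using assms sum_int_telescope[of "- int m" u Psi] by simp
  finally show ?thesis using assms by (simp add: delay_ivp_solution_def Zmat_def)
qed

lemma delay_ivp_solution_solves:
  assumes commute: "\<forall>u\<in>{- int m..0}. A1 ** Psi u = Psi u ** A1"
  shows "solves_delay_from A0 A1 m 0 (delay_ivp_solution A0 A1 m Psi)"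
proof -
  have initial_term: "solves_delay_from A0 A1 m 0 (\<lambda>u. Zmat A0 A1 m u ** Psi (- int m))"
    by (rule solves_delay_from_mono[OF solves_delay_from_mult_right[OF Zmat_solves_delay]])
      (use commute in auto)
  have "solves_delay_from A0 A1 m 0 (\<lambda>u. Zmat A0 A1 m (u - int m - r) ** (Psi r - Psi (r - 1)))"
    if r: "r \<in> {- int m + 1..0}" for r
  proof -
    have "A1 ** (Psi r - Psi (r - 1)) = (Psi r - Psi (r - 1)) ** A1"
      using commute r by (simp add: linear_diff[OF linear_matrix_mult_left]
          linear_diff[OF linear_matrix_mult_right])
    moreover have "solves_delay_from A0 A1 m r (\<lambda>u. Zmat A0 A1 m (u - (int m + r)))"
      using solves_delay_from_shift[OF Zmat_solves_delay, of A0 A1 m "int m + r"] by simp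
    ultimately have "solves_delay_from A0 A1 m r
        (\<lambda>u. Zmat A0 A1 m (u - (int m + r)) ** (Psi r - Psi (r - 1)))"
      by (intro solves_delay_from_mult_right)
    from solves_delay_from_mono[OF this, of 0] show ?thesis
      using r by (simp add: diff_diff_eq)
  qed
  then show ?thesis unfolding delay_ivp_solution_def[abs_def]
    by (intro solves_delay_from_add initial_term solves_delay_from_sum)
qed

theorem theorem5:
  fixes A0 A1 :: "real^'n^'n" and m :: nat and Psi :: "int \<Rightarrow> real^'n^'n"
    and X :: "int \<Rightarrow> real^'n^'n"
  assumes "m \<ge> 1"
    and "\<forall>u\<in>{- int m..0}. A1 ** Psi u = Psi u ** A1"
  defines "X \<equiv> (\<lambda>u. Zmat A0 A1 m u ** Psi (- int m)
      + (\<Sum>r\<in>{- int m + 1..0}. Zmat A0 A1 m (u - int m - r) ** (Psi r - Psi (r - 1))))"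
  shows "(\<forall>u\<ge>0. X (u + 1) - X u = A0 ** X (u - int m) + X (u - int m) ** A1)
       \<and> (\<forall>u\<in>{- int m..0}. X u = Psi u)
       \<and> (\<forall>Y :: int \<Rightarrow> real^'n^'n.
            (\<forall>u\<ge>0. Y (u + 1) - Y u = A0 ** Y (u - int m) + Y (u - int m) ** A1)
          \<and> (\<forall>u\<in>{- int m..0}. Y u = Psi u)
          \<longrightarrow> (\<forall>u\<ge>- int m. Y u = X u))"
proof -
  have X: "X = delay_ivp_solution A0 A1 m Psi"
    unfolding X_def delay_ivp_solution_def[abs_def] ..
  have solves: "solves_delay_from A0 A1 m 0 X"
    using delay_ivp_solution_solves[OF assms(2)] by (simp add: X)
  have initial: "\<forall>u\<in>{- int m..0}. X u = Psi u"
    by (simp add: X delay_ivp_solution_initial)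
  have unique: "Y u = X u"
    if "solves_delay_from A0 A1 m 0 Y" "\<forall>u\<in>{- int m..0}. Y u = Psi u" "- int m \<le> u" for Y u
    using solves_delay_from_unique[of A0 A1 m 0 Y X] that solves initial by simp
  show ?thesis
    using solves initial unique unfolding solves_delay_from_def by blast
qed

end
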